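(* Let $n\ge 4$ and $\bar K>0$. For all $x\ge 0$ the functions $a,\mathring a$ satisfy: (i) $\frac{4x(\mathring a'(x))^2}{\mathring a(x)}<1$; (ii) $2x\mathring a''(x)+\mathring a'(x)<\frac{2(n-1)}{n(n+2)}$; (iii) $\frac{n-2}{\sqrt{n(n-1)}}\sqrt{x\,\mathring a(x)}+\mathring a(x)<\frac{x}{n}+n\bar K$; (iv) $n\bar K(\mathring a+x\mathring a')-a(\mathring a-x\mathring a')\ge\frac{2n(n-2)(n-1)^2\bar K^4}{\big(x+\sqrt{2+\sqrt{2n}}\,(n-1)\bar K\big)^2}$; (v) $2\mathring a-\frac{x}{n}+x\mathring a'\le 2\sqrt{2n}\,\bar K-\frac{(n-4)x}{n(n-1)}-\frac{6(\sqrt{2n}-2)\bar K x}{3x+2\sqrt{2n}(n-1)\bar K}$; (vi) $\frac{x}{n-1}(a+n\bar K)-\Big(\frac{x}{n-1}+2n\bar K\Big)\big(\mathring a+a-n\bar K-x\mathring a'\big)<-\frac{2x\bar K}{n-1}+2n(n-4)\bar K^2$, where $a,\mathring a,\mathring a',\mathring a''$ are evaluated at $x$.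
   Context: For $x\ge0$: $a(x)=\sqrt{\big(\frac{x}{n-1}+2\bar K\big)^2+(2n-4)\bar K^2}$ and $\mathring a(x)=a(x)-\frac{x}{n}$; primes denote derivatives in $x$. *)

theory Defs
  imports "HOL-Analysis.Analysis"
begin

definition a_fun :: "nat \<Rightarrow> real \<Rightarrow> real \<Rightarrow> real" where
  "a_fun n K x = sqrt ((x / (real n - 1) + 2 * K)^2 + (2 * real n - 4) * K^2)"

definition ar_fun :: "nat \<Rightarrow> real \<Rightarrow> real \<Rightarrow> real" where
  "ar_fun n K x = a_fun n K x - x / real n"

end

(* Writing x = (n - 1) K t and a(x) = K alpha removes K and turns every item into an inequality
   in t >= 0 and alpha > 0 on the hyperbola alpha^2 = (t + 2)^2 + 2n - 4, linear in alpha once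
   alpha^2 is eliminated.  An inequality Q <= alpha P with P >= 0 then follows from
   (alpha P)^2 - Q^2 >= 0, which for (i), (iv), (v) and (vi) is a polynomial with nonnegative
   coefficients in t and a shifted parameter (n - 4, sqrt (2 + sqrt (2n)) - 219/100 or
   sqrt (2n) - 2).  Item (ii) reduces to 3s - 2s^3 < 3/2 for s = (t + 2)/alpha in [0, 1]. *)
theory Submission
  imports Defs
begin

lemma a_fun_radicand_pos:
  assumes "2 < n" "K \<noteq> 0"
  shows "0 < (x / (real n - 1) + 2 * K)^2 + (2 * real n - 4) * K^2"
proof -
  have "0 < (2 * real n - 4) * K^2" using assms by simp
  then show ?thesis by (simp add: add_nonneg_pos)
qed

lemma a_fun_pos: "2 < n \<Longrightarrow> K \<noteq> 0 \<Longrightarrow> 0 < a_fun n K x"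
  unfolding a_fun_def using a_fun_radicand_pos by simp

lemma a_fun_squared:
  "2 < n \<Longrightarrow> K \<noteq> 0 \<Longrightarrow> (a_fun n K x)^2 = (x / (real n - 1) + 2 * K)^2 + (2 * real n - 4) * K^2"
  unfolding a_fun_def using a_fun_radicand_pos by (simp add: less_imp_le)

lemma has_real_derivative_a_fun:
  assumes "2 < n" "K \<noteq> 0"
  shows "(a_fun n K has_real_derivative
           (x / (real n - 1) + 2 * K) / ((real n - 1) * a_fun n K x)) (at x)"
proof -
  have "inverse S / 2 * (2 * u * (1 / m)) = u / (m * S)" for S u m :: real
    by (simp add: field_simps)
  moreover have "(a_fun n K has_real_derivative
          inverse (a_fun n K x) / 2 * (2 * (x / (real n - 1) + 2 * K) * (1 / (real n - 1)))) (at x)"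
    unfolding a_fun_def[abs_def] using a_fun_radicand_pos[OF assms, of x] assms
    by (auto intro!: derivative_eq_intros)
  ultimately show ?thesis by metis
qed

lemma deriv_ar_fun:
  assumes "2 < n" "K \<noteq> 0"
  shows "deriv (ar_fun n K) = (\<lambda>x. (x / (real n - 1) + 2 * K) / ((real n - 1) * a_fun n K x) - 1 / real n)"
proof
  fix x
  show "deriv (ar_fun n K) x = (x / (real n - 1) + 2 * K) / ((real n - 1) * a_fun n K x) - 1 / real n"
    unfolding ar_fun_def[abs_def]
    using assms by (auto intro!: DERIV_imp_deriv derivative_eq_intros has_real_derivative_a_fun)
qed

lemma deriv2_ar_fun:
  assumes "2 < n" "K \<noteq> 0"
  shows "deriv (deriv (ar_fun n K)) x = (2 * real n - 4) * K^2 / ((real n - 1)^2 * a_fun n K x ^ 3)"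
proof -
  have m: "real n - 1 \<noteq> 0" using assms by simp
  have A: "a_fun n K x \<noteq> 0" using a_fun_pos[OF assms] by (metis less_irrefl)
  have "(A - u * u / A) / (m * A * (m * A)) = (A^2 - u^2) / (m^2 * A^3)"
    if "m \<noteq> 0" "A \<noteq> 0" for m u A :: real
    using that by (simp add: field_simps power2_eq_square power3_eq_cube)
  from this[OF m A, of "x / (real n - 1) + 2 * K"]
  show ?thesis
    unfolding deriv_ar_fun[OF assms] using assms A
    by (auto intro!: DERIV_imp_deriv derivative_eq_intros has_real_derivative_a_fun
             simp: a_fun_squared)
qed

lemma normalized_slope_ineq:
  fixes N t \<alpha> :: real
  assumes N: "4 \<le> N" and t: "0 \<le> t" and \<alpha>: "0 < \<alpha>"
    and \<alpha>_sq: "\<alpha>^2 = (t + 2)^2 + 2 * N - 4"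
  shows "4 * t * (N * (t + 2) - (N - 1) * \<alpha>)^2 < N * (N - 1) * \<alpha>^2 * (N * \<alpha> - (N - 1) * t)"
proof -
  define M where "M = N - 4"
  have N_eq: "N = M + 4" and M: "0 \<le> M" using N unfolding M_def by auto
  define P where "P = t^2*N^3 + 7*t^2*N^2 - 8*t^2*N + 4*t*N^3 + 12*t*N^2 - 16*t*N + 2*N^4 - 2*N^3"
  define Q where "Q = t^3*N^3 + 6*t^3*N^2 - 7*t^3*N + 4*t^3 + 4*t^2*N^3 + 24*t^2*N^2 - 28*t^2*N
    + 16*t^2 + 2*t*N^4 + 4*t*N^3 + 2*t*N^2 + 8*t*N"
  have diff: "N * (N - 1) * \<alpha>^2 * (N * \<alpha> - (N - 1) * t) - 4 * t * (N * (t + 2) - (N - 1) * \<alpha>)^2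
      = \<alpha> * P - Q"
    unfolding P_def Q_def using \<alpha>_sq by algebra
  have "P = t^2*M^3 + 19*t^2*M^2 + 96*t^2*M + 144*t^2 + 4*t*M^3 + 60*t*M^2 + 272*t*M + 384*t
      + 2*M^4 + 30*M^3 + 168*M^2 + 416*M + 384"
    unfolding P_def using N_eq by algebra
  then have P: "0 \<le> P" using t M by (simp add: add_nonneg_nonneg)
  have "(\<alpha> * P)^2 - Q^2 = ((t + 2)^2 + 2 * N - 4) * P^2 - Q^2"
    by (simp add: power_mult_distrib \<alpha>_sq)
  also have "\<dots> = 1179648 + 2*t^6*M^5 + 51*t^6*M^4 + 460*t^6*M^3 + 1871*t^6*M^2 + 3440*t^6*M + 2240*t^6 +
      4*t^5*M^6 + 136*t^5*M^5 + 1788*t^5*M^4 + 11712*t^5*M^3 + 40312*t^5*M^2 + 68992*t^5*M +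
      45568*t^5 + 2*t^4*M^7 + 108*t^4*M^6 + 2126*t^4*M^5 + 20840*t^4*M^4 + 112796*t^4*M^3 +
      341664*t^4*M^2 + 539904*t^4*M + 344064*t^4 + 32*t^3*M^7 + 1120*t^3*M^6 + 16208*t^3*M^5 +
      126464*t^3*M^4 + 575600*t^3*M^3 + 1528512*t^3*M^2 + 2191360*t^3*M + 1306624*t^3 +
      8*t^2*M^8 + 376*t^2*M^7 + 7124*t^2*M^6 + 72912*t^2*M^5 + 446780*t^2*M^4 +
      1691552*t^2*M^3 + 3883200*t^2*M^2 + 4957184*t^2*M + 2699264*t^2 + 48*t*M^8 +
      1568*t*M^7 + 22192*t*M^6 + 177920*t*M^5 + 884480*t*M^4 + 2793472*t*M^3 + 5476352*t*M^2 +
      6094848*t*M + 2949120*t + 8*M^9 + 272*M^8 + 4104*M^7 + 36064*M^6 + 203392*M^5 +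
      763392*M^4 + 1906688*M^3 + 3055616*M^2 + 2850816*M"
    unfolding P_def Q_def using N_eq by algebra
  also have "\<dots> > 0"
    using t M by (intro add_pos_nonneg) (auto intro!: add_nonneg_nonneg mult_nonneg_nonneg)
  finally have "Q^2 < (\<alpha> * P)^2" by linarith
  then have "Q < \<alpha> * P" by (rule power2_less_imp_less) (use \<alpha> P in simp)
  then show ?thesis using diff by linarith
qed

lemma cubic_lt_three_halves:
  fixes u \<alpha> :: real
  assumes "0 \<le> u" "u \<le> \<alpha>" "0 < \<alpha>"
  shows "3 * u * \<alpha>^2 - 2 * u^3 < 3 / 2 * \<alpha>^3"
proof -
  have "3 / 2 * \<alpha>^3 - (3 * u * \<alpha>^2 - 2 * u^3)
      = (4 * (10 * u - 7 * \<alpha>)^2 * (5 * u + 7 * \<alpha>) + 60 * (\<alpha> - u) * \<alpha>^2 + 68 * \<alpha>^3) / 1000"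
    by (simp add: field_simps power2_eq_square power3_eq_cube)
  also have "\<dots> > 0"
    using assms by (intro divide_pos_pos add_nonneg_pos add_nonneg_nonneg) auto
  finally show ?thesis by simp
qed

lemma normalized_second_order_ineq:
  fixes N t \<alpha> :: real
  assumes N: "2 \<le> N" and t: "0 \<le> t" and \<alpha>: "0 < \<alpha>"
    and \<alpha>_sq: "\<alpha>^2 = (t + 2)^2 + 2 * N - 4"
  shows "4 * (N - 2) * t / \<alpha>^3 + (t + 2) / \<alpha> < 3 / 2"
proof -
  define u where "u = t + 2"
  have u: "0 \<le> u" "t \<le> u" and c: "\<alpha>^2 - u^2 = 2 * N - 4" and c0: "0 \<le> 2 * N - 4"
    using t N \<alpha>_sq unfolding u_def by auto
  have "u^2 \<le> \<alpha>^2" using c c0 by linarith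
  then have "u \<le> \<alpha>" by (rule power2_le_imp_le) (use \<alpha> in simp)
  have "(4 * (N - 2) * t / \<alpha>^3 + (t + 2) / \<alpha>) * \<alpha>^3 = 2 * t * (2 * N - 4) + u * \<alpha>^2"
    unfolding u_def using \<alpha> by (simp add: field_simps power2_eq_square power3_eq_cube)
  also have "\<dots> \<le> 2 * u * (2 * N - 4) + u * \<alpha>^2"
    using u c0 by (simp add: mult_right_mono)
  also have "\<dots> = 3 * u * \<alpha>^2 - 2 * u^3"
    unfolding c[symmetric] by (simp add: algebra_simps power2_eq_square power3_eq_cube)
  also have "\<dots> < 3 / 2 * \<alpha>^3"
    using u \<open>u \<le> \<alpha>\<close> \<alpha> by (intro cubic_lt_three_halves)
  finally show ?thesis using \<alpha> by (simp add: mult_less_cancel_right_pos)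
qed

lemma normalized_sqrt_ineq:
  fixes N t \<alpha> :: real
  assumes N: "2 < N" and t: "0 \<le> t" and \<alpha>: "0 < \<alpha>"
    and \<alpha>_sq: "\<alpha>^2 = (t + 2)^2 + 2 * N - 4"
  shows "(N - 2) * sqrt (t * (N * \<alpha> - (N - 1) * t)) < 2 * (N - 1) * t + N^2 - N * \<alpha>"
proof -
  define R where "R = 2 * (N - 1) * t + N^2 - N * \<alpha>"
  define q where "q = (t + 2)^2 + N - 2"
  have "(N * \<alpha>)^2 < (2 * (N - 1) * t + N^2)^2"
  proof -
    have "(2 * (N - 1) * t + N^2)^2 - (N * \<alpha>)^2
        = (N - 2) * ((3 * N - 2) * t^2 + 4 * N^2 * t + N^3)"
      unfolding power_mult_distrib \<alpha>_sq by (simp add: algebra_simps power2_eq_square power3_eq_cube)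
    moreover have "0 < (N - 2) * ((3 * N - 2) * t^2 + 4 * N^2 * t + N^3)"
      using N t by (intro mult_pos_pos add_nonneg_pos add_nonneg_nonneg) auto
    ultimately show ?thesis by linarith
  qed
  then have "N * \<alpha> < 2 * (N - 1) * t + N^2"
    by (rule power2_less_imp_less) (use N t in simp)
  then have R: "0 < R" unfolding R_def by simp
  have "\<alpha> * (t + 2) < q"
  proof (rule power2_less_imp_less)
    have "q^2 - (\<alpha> * (t + 2))^2 = (N - 2)^2"
      unfolding q_def power_mult_distrib \<alpha>_sq by (simp add: algebra_simps power2_eq_square)
    moreover have "0 < (N - 2)^2" using N by simp
    ultimately show "(\<alpha> * (t + 2))^2 < q^2" by linarith
    show "0 \<le> q" unfolding q_def using N zero_le_power2[of "t + 2"] by linarith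
  qed
  then have "0 < N^3 * (q - \<alpha> * (t + 2))" using N by simp
  moreover have "R^2 - (N - 2)^2 * (t * (N * \<alpha> - (N - 1) * t)) = N^3 * (q - \<alpha> * (t + 2))"
    unfolding R_def q_def using \<alpha>_sq by algebra
  ultimately have "(N - 2)^2 * (t * (N * \<alpha> - (N - 1) * t)) < R^2" by linarith
  then have "sqrt ((N - 2)^2 * (t * (N * \<alpha> - (N - 1) * t))) < R"
    using R by (intro real_less_lsqrt) auto
  then show ?thesis
    unfolding R_def using N by (simp add: real_sqrt_mult)
qed

lemma normalized_lower_ineq:
  fixes s t w \<alpha> :: real
  assumes w: "219 / 100 \<le> w" and s: "s = w^2 - 2" and t: "0 \<le> t" and \<alpha>: "0 < \<alpha>"
    and \<alpha>_sq: "\<alpha>^2 = t^2 + 4 * t + s^2"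
  shows "\<alpha> * (\<alpha> + t + 2) \<le> (\<alpha> - t) * (t + w)^2"
proof -
  \<comment> \<open>219/100 is a rational lower bound for sqrt (2 + sqrt 8), the smallest relevant w.\<close>
  define z where "z = w - 219 / 100"
  have w_eq: "w = z + 219 / 100" and z: "0 \<le> z" using w unfolding z_def by auto
  define P where "P = t^2 + 2*t*w - t + w^2 - 2"
  define Q where "Q = t^3 + 2*t^2*w + t^2 + t*w^2 + 4*t + s^2"
  have diff: "(\<alpha> - t) * (t + w)^2 - \<alpha> * (\<alpha> + t + 2) = \<alpha> * P - Q"
    unfolding P_def Q_def using \<alpha>_sq by algebra
  have "P = t^2 + 2 * t * z + 169 / 50 * t + z^2 + 219 / 50 * z + 27961 / 10000"
    unfolding P_def w_eq by (simp add: algebra_simps power2_eq_square)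
  then have P: "0 \<le> P" using t z by (simp add: add_nonneg_nonneg)
  have "(\<alpha> * P)^2 - Q^2 = (t^2 + 4 * t + s^2) * P^2 - Q^2"
    by (simp add: power_mult_distrib \<alpha>_sq)
  also have "\<dots> = t^4*z^4 + (219/25)*t^4*z^3 + (123883/5000)*t^4*z^2 + (8123459/250000)*t^4*z +
      (533817521/100000000)*t^4 + 4*t^3*z^5 + (199/5)*t^3*z^4 + (35201/250)*t^3*z^3 +
      (5897799/25000)*t^3*z^2 + (977316801/5000000)*t^3*z + (73841284999/2500000000)*t^3 +
      6*t^2*z^6 + (1771/25)*t^2*z^5 + (315049/1000)*t^2*z^4 + (16767177/25000)*t^2*z^3 +
      (7347936489/10000000)*t^2*z^2 + (1016942942891/2500000000)*t^2*z +
      (27484269509443/500000000000)*t^2 + 4*t*z^7 + (1433/25)*t*z^6 + (815781/2500)*t*z^5 +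
      (46795913/50000)*t*z^4 + (7085899047/5000000)*t*z^3 + (2725886657579/2500000000)*t*z^2 +
      (95122406193367/250000000000)*t*z + (1037752522857039/25000000000000)*t"
    unfolding P_def Q_def s w_eq by algebra
  also have "\<dots> \<ge> 0"
    using t z by (auto intro!: add_nonneg_nonneg mult_nonneg_nonneg)
  finally have "Q^2 \<le> (\<alpha> * P)^2" by linarith
  then have "Q \<le> \<alpha> * P" by (rule power2_le_imp_le) (use \<alpha> P in simp)
  then show ?thesis using diff by linarith
qed

lemma normalized_upper_ineq:
  fixes s t \<alpha> :: real
  assumes s: "2 \<le> s" and t: "0 \<le> t" and \<alpha>: "0 < \<alpha>" and \<alpha>_sq: "\<alpha>^2 = t^2 + 4 * t + s^2"
  shows "(2 * \<alpha>^2 + t * (t + 2)) * (3 * t + 2 * s) + 6 * (s - 2) * t * \<alpha> \<le> \<alpha> * (3 * t + 2 * s)^2"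
proof -
  define z where "z = s - 2"
  have s_eq: "s = z + 2" and z: "0 \<le> z" using s unfolding z_def by auto
  define P where "P = 9 * t^2 + 6 * t * s + 12 * t + 4 * s^2"
  define Q where "Q = 9 * t^3 + 6 * t^2 * s + 30 * t^2 + 6 * t * s^2 + 20 * t * s + 4 * s^3"
  have diff: "\<alpha> * (3 * t + 2 * s)^2 - ((2 * \<alpha>^2 + t * (t + 2)) * (3 * t + 2 * s) + 6 * (s - 2) * t * \<alpha>)
      = \<alpha> * P - Q"
    unfolding P_def Q_def using \<alpha>_sq by algebra
  have P: "0 \<le> P" unfolding P_def using s t by (simp add: add_nonneg_nonneg)
  have "(\<alpha> * P)^2 - Q^2 = (t^2 + 4 * t + s^2) * P^2 - Q^2"
    by (simp add: power_mult_distrib \<alpha>_sq)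
  also have "\<dots> = 45*t^4*z^2 + 36*t^4*z + 12*t^3*z^3 + 216*t^3*z^2 + 96*t^3*z + 40*t^2*z^4 + 176*t^2*z^3 +
      224*t^2*z^2 + 64*t^2*z"
    unfolding P_def Q_def s_eq by algebra
  also have "\<dots> \<ge> 0"
    using t z by (auto intro!: add_nonneg_nonneg mult_nonneg_nonneg)
  finally have "Q^2 \<le> (\<alpha> * P)^2" by linarith
  then have "Q \<le> \<alpha> * P" by (rule power2_le_imp_le) (use \<alpha> P in simp)
  then show ?thesis using diff by linarith
qed

lemma normalized_mixed_ineq:
  fixes N t \<alpha> :: real
  assumes N: "4 \<le> N" and t: "0 \<le> t" and \<alpha>: "0 < \<alpha>"
    and \<alpha>_sq: "\<alpha>^2 = (t + 2)^2 + 2 * N - 4"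
  shows "t * \<alpha>^2 + N * t * \<alpha> - (t + 2 * N) * (2 * \<alpha>^2 - t * (t + 2) - N * \<alpha>) + 2 * t * \<alpha>
      - 2 * N * (N - 4) * \<alpha> < 0"
proof -
  define M where "M = N - 4"
  have N_eq: "N = M + 4" and M: "0 \<le> M" using N unfolding M_def by auto
  define P where "P = 2*t*N + 2*t + 8*N"
  define Q where "Q = 2*t^2*N + 2*t^2 + 14*t*N + 8*N^2"
  have diff: "t * \<alpha>^2 + N * t * \<alpha> - (t + 2 * N) * (2 * \<alpha>^2 - t * (t + 2) - N * \<alpha>) + 2 * t * \<alpha>
      - 2 * N * (N - 4) * \<alpha> = \<alpha> * P - Q"
    unfolding P_def Q_def using \<alpha>_sq by algebra
  have Q: "0 \<le> Q" unfolding Q_def using N t by (simp add: add_nonneg_nonneg)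
  have "Q^2 - (\<alpha> * P)^2 = Q^2 - ((t + 2)^2 + 2 * N - 4) * P^2"
    by (simp add: power_mult_distrib \<alpha>_sq)
  also have "\<dots> = 8192 + 8*t^3*M^2 + 56*t^3*M + 80*t^3 + 24*t^2*M^3 + 308*t^2*M^2 + 1176*t^2*M +
      1312*t^2 + 160*t*M^3 + 1600*t*M^2 + 5120*t*M + 5120*t + 64*M^4 + 896*M^3 + 4608*M^2 +
      10240*M"
    unfolding P_def Q_def N_eq by algebra
  also have "\<dots> > 0"
    using t M by (intro add_pos_nonneg) (auto intro!: add_nonneg_nonneg mult_nonneg_nonneg)
  finally have "(\<alpha> * P)^2 < Q^2" by linarith
  then have "\<alpha> * P < Q" using Q by (rule power2_less_imp_less)
  then show ?thesis using diff by linarith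
qed

text \<open>A point x \<ge> 0 with N = n as a real and A = a(x); ar, ar1 and ar2 are closed forms of
  the traceless part a(x) - x/N and of its first two derivatives.\<close>

locale a_at_point =
  fixes N K x A :: real
  assumes N: "4 \<le> N" and K: "0 < K" and x: "0 \<le> x"
    and A_def: "A = sqrt ((x / (N - 1) + 2 * K)^2 + (2 * N - 4) * K^2)"
begin

definition ar where "ar = A - x / N"
definition ar1 where "ar1 = (x / (N - 1) + 2 * K) / ((N - 1) * A) - 1 / N"
definition ar2 where "ar2 = (2 * N - 4) * K^2 / ((N - 1)^2 * A^3)"

lemma normalized_coordinates:
  obtains t \<alpha> where "x = (N - 1) * K * t" "A = K * \<alpha>" "0 \<le> t" "0 < \<alpha>" "t + 2 < \<alpha>"
    "\<alpha>^2 = (t + 2)^2 + 2 * N - 4"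
proof -
  have m: "0 < N - 1" using N by simp
  define t where "t = x / ((N - 1) * K)"
  define \<alpha> where "\<alpha> = A / K"
  have x_eq: "x = (N - 1) * K * t" and A_eq: "A = K * \<alpha>" and t: "0 \<le> t"
    unfolding t_def \<alpha>_def using m K x by auto
  have e: "x / (N - 1) + 2 * K = K * (t + 2)" unfolding x_eq using m by (simp add: distrib_left)
  have "A^2 = (x / (N - 1) + 2 * K)^2 + (2 * N - 4) * K^2" unfolding A_def using N by simp
  then have "(K * \<alpha>)^2 = (K * (t + 2))^2 + (2 * N - 4) * K^2" by (simp only: A_eq e)
  then have "K^2 * \<alpha>^2 = K^2 * ((t + 2)^2 + 2 * N - 4)"
    unfolding power_mult_distrib by (simp add: algebra_simps)
  then have \<alpha>_sq: "\<alpha>^2 = (t + 2)^2 + 2 * N - 4" using K by simp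
  have "(t + 2)^2 < \<alpha>^2" using \<alpha>_sq N by simp
  moreover have "0 \<le> \<alpha>" unfolding \<alpha>_def A_def using N K by simp
  ultimately have "t + 2 < \<alpha>" by (rule power2_less_imp_less)
  moreover from this t have "0 < \<alpha>" by linarith
  ultimately show thesis using that x_eq A_eq t \<alpha>_sq by blast
qed

lemma ar_normalized: "x = (N - 1) * K * t \<Longrightarrow> A = K * \<alpha> \<Longrightarrow> ar = K * (N * \<alpha> - (N - 1) * t) / N"
  unfolding ar_def using N by (simp add: field_simps)

lemma ar1_normalized:
  assumes "x = (N - 1) * K * t" "A = K * \<alpha>" "0 < \<alpha>"
  shows "ar1 = (N * (t + 2) - (N - 1) * \<alpha>) / (N * (N - 1) * \<alpha>)"
proof -
  define m where "m = N - 1"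
  have "0 < m" "0 < N" using N unfolding m_def by auto
  then show ?thesis
    unfolding ar1_def unfolding assms(1,2) m_def[symmetric] using K assms(3) by (simp add: field_simps)
qed

lemma ar2_normalized:
  assumes "A = K * \<alpha>" "0 < \<alpha>"
  shows "ar2 = 2 * (N - 2) / ((N - 1)^2 * K * \<alpha>^3)"
proof -
  define m where "m = N - 1"
  have "0 < m" using N unfolding m_def by auto
  then show ?thesis
    unfolding ar2_def unfolding assms(1) m_def[symmetric] using K assms(2)
    by (simp add: field_simps power2_eq_square power3_eq_cube)
qed

lemma slope_bound: "4 * x * ar1^2 / ar < 1"
proof -
  obtain t \<alpha> where x_eq: "x = (N - 1) * K * t" and A_eq: "A = K * \<alpha>" and t: "0 \<le> t"
    and \<alpha>_pos: "0 < \<alpha>" and \<alpha>: "t + 2 < \<alpha>" and \<alpha>_sq: "\<alpha>^2 = (t + 2)^2 + 2 * N - 4"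
    by (rule normalized_coordinates)
  define m where "m = N - 1"
  have "0 < m" "0 < N" using N unfolding m_def by auto
  have "0 < N * (\<alpha> - t) + t" using N t \<alpha> by (intro add_pos_nonneg) auto
  then have denom_pos: "0 < N * \<alpha> - m * t" unfolding m_def by (simp add: algebra_simps)
  have "4 * x * ar1^2 / ar
      = 4 * t * (N * (t + 2) - (N - 1) * \<alpha>)^2 / (N * (N - 1) * \<alpha>^2 * (N * \<alpha> - (N - 1) * t))"
    unfolding ar_normalized[OF x_eq A_eq] ar1_normalized[OF x_eq A_eq \<alpha>_pos] unfolding x_eq
    unfolding m_def[symmetric] using denom_pos K \<alpha>_pos \<open>0 < m\<close> \<open>0 < N\<close>
    by (simp add: field_simps power2_eq_square)
  also have "\<dots> < 1"
    using normalized_slope_ineq[OF N t \<alpha>_pos \<alpha>_sq] N \<alpha>_pos denom_pos unfolding m_def by simp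
  finally show ?thesis .
qed

lemma second_order_bound: "2 * x * ar2 + ar1 < 2 * (N - 1) / (N * (N + 2))"
proof -
  obtain t \<alpha> where x_eq: "x = (N - 1) * K * t" and A_eq: "A = K * \<alpha>" and t: "0 \<le> t"
    and \<alpha>_pos: "0 < \<alpha>" and "t + 2 < \<alpha>" and \<alpha>_sq: "\<alpha>^2 = (t + 2)^2 + 2 * N - 4"
    by (rule normalized_coordinates)
  define m where "m = N - 1"
  have m: "0 < m" and "0 < N" using N unfolding m_def by auto
  define X where "X = 4 * (N - 2) * t / \<alpha>^3 + (t + 2) / \<alpha>"
  have "2 * x * ar2 + ar1 = X / m - 1 / N"
    unfolding ar2_normalized[OF A_eq \<alpha>_pos] ar1_normalized[OF x_eq A_eq \<alpha>_pos] unfolding x_eq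
    unfolding X_def m_def[symmetric] using m K \<alpha>_pos \<open>0 < N\<close>
    by (simp add: field_simps power2_eq_square power3_eq_cube)
  also have "\<dots> < 3 / (N + 2) - 1 / N"
  proof -
    have "X < 3 / 2"
      unfolding X_def using N t \<alpha>_pos \<alpha>_sq by (intro normalized_second_order_ineq) auto
    then have "X / m < 3 / 2 / m" using m by (intro divide_strict_right_mono)
    also have "3 / 2 / m \<le> 3 / (N + 2)" unfolding m_def using N by (simp add: field_simps)
    finally show ?thesis by simp
  qed
  also have "\<dots> = 2 * (N - 1) / (N * (N + 2))" using N by (simp add: field_simps)
  finally show ?thesis .
qed

lemma sqrt_bound: "(N - 2) / sqrt (N * (N - 1)) * sqrt (x * ar) + ar < x / N + N * K"
proof -
  obtain t \<alpha> where x_eq: "x = (N - 1) * K * t" and A_eq: "A = K * \<alpha>" and t: "0 \<le> t"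
    and \<alpha>_pos: "0 < \<alpha>" and "t + 2 < \<alpha>" and \<alpha>_sq: "\<alpha>^2 = (t + 2)^2 + 2 * N - 4"
    by (rule normalized_coordinates)
  define m where "m = N - 1"
  have m: "0 < m" and "0 < N" using N unfolding m_def by auto
  have "x * ar = (K / N)^2 * (N * m) * (t * (N * \<alpha> - m * t))"
    unfolding ar_normalized[OF x_eq A_eq] unfolding x_eq m_def[symmetric] using \<open>0 < N\<close>
    by (simp add: field_simps power2_eq_square)
  then have "sqrt (x * ar) = K / N * sqrt (N * m) * sqrt (t * (N * \<alpha> - m * t))"
    using K \<open>0 < N\<close> by (simp add: real_sqrt_mult)
  then have "(N - 2) / sqrt (N * (N - 1)) * sqrt (x * ar) = K / N * ((N - 2) * sqrt (t * (N * \<alpha> - m * t)))"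
    unfolding m_def[symmetric] using m \<open>0 < N\<close> by (simp add: field_simps)
  also have "\<dots> < K / N * (2 * m * t + N^2 - N * \<alpha>)"
    using normalized_sqrt_ineq[of N t \<alpha>] N t \<alpha>_pos \<alpha>_sq K unfolding m_def
    by (intro mult_strict_left_mono) auto
  also have "\<dots> = x / N + N * K - ar"
    unfolding ar_normalized[OF x_eq A_eq] unfolding x_eq m_def[symmetric] using \<open>0 < N\<close>
    by (simp add: field_simps power2_eq_square)
  finally show ?thesis by simp
qed

lemma lower_bound:
  "2 * N * (N - 2) * (N - 1)^2 * K^4 / (x + sqrt (2 + sqrt (2 * N)) * (N - 1) * K)^2
    \<le> N * K * (ar + x * ar1) - A * (ar - x * ar1)"
proof -
  obtain t \<alpha> where x_eq: "x = (N - 1) * K * t" and A_eq: "A = K * \<alpha>" and t: "0 \<le> t"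
    and \<alpha>_pos: "0 < \<alpha>" and \<alpha>: "t + 2 < \<alpha>" and \<alpha>_sq: "\<alpha>^2 = (t + 2)^2 + 2 * N - 4"
    by (rule normalized_coordinates)
  define m where "m = N - 1"
  have m: "0 < m" and "0 < N" using N unfolding m_def by auto
  define s where "s = sqrt (2 * N)"
  define w where "w = sqrt (2 + s)"
  have s_sq: "s^2 = 2 * N" unfolding s_def using N by simp
  have "(14 / 5)^2 \<le> 2 * N" using N by (simp add: power2_eq_square)
  then have "14 / 5 \<le> s" unfolding s_def by (rule real_le_rsqrt)
  then have w_sq: "w^2 = 2 + s" and "(219 / 100)^2 \<le> 2 + s"
    unfolding w_def by (simp_all add: power2_eq_square)
  then have w: "219 / 100 \<le> w" unfolding w_def by (intro real_le_rsqrt)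
  have tw: "0 < t + w" using t w by linarith
  have N_factor: "2 * (N - 2) = (\<alpha> - t - 2) * (\<alpha> + t + 2)"
    using \<alpha>_sq by (simp add: algebra_simps power2_eq_square)
  have den: "x + w * (N - 1) * K = (N - 1) * K * (t + w)"
    unfolding x_eq by (simp add: algebra_simps)
  have "2 * N * (N - 2) * (N - 1)^2 * K^4 / (x + sqrt (2 + sqrt (2 * N)) * (N - 1) * K)^2
      = N * K^2 * (2 * (N - 2)) / (t + w)^2"
    unfolding s_def[symmetric] w_def[symmetric] unfolding den unfolding power_mult_distrib m_def[symmetric]
    using m K tw by (simp add: field_simps)
  also have "\<dots> = N * K^2 * (\<alpha> - t - 2) * ((\<alpha> + t + 2) / (t + w)^2)"
    unfolding N_factor by simp
  also have "\<dots> \<le> N * K^2 * (\<alpha> - t - 2) * ((\<alpha> - t) / \<alpha>)"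
  proof (rule mult_left_mono)
    have "\<alpha> * (\<alpha> + t + 2) \<le> (\<alpha> - t) * (t + w)^2"
      using w w_sq t \<alpha>_pos \<alpha>_sq s_sq by (intro normalized_lower_ineq[of w s]) (auto simp: algebra_simps power2_eq_square)
    then show "(\<alpha> + t + 2) / (t + w)^2 \<le> (\<alpha> - t) / \<alpha>"
      using tw \<alpha>_pos by (simp add: field_simps mult.commute)
    show "0 \<le> N * K^2 * (\<alpha> - t - 2)" using \<open>0 < N\<close> \<alpha> by simp
  qed
  also have "\<dots> = K^2 * (N * \<alpha> - 2 * m * t + N * t * (t + 2) / \<alpha> - 2 * t - 2 * N)"
    unfolding m_def using \<alpha>_pos by (simp add: field_simps power2_eq_square)
  also have "\<dots> = K^2 * (N * \<alpha> - 2 * m * t + N * t * (t + 2) / \<alpha> - \<alpha>^2 + t * (t + 2))"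
    unfolding \<alpha>_sq by (simp add: algebra_simps power2_eq_square)
  also have "\<dots> = N * K * (ar + x * ar1) - A * (ar - x * ar1)"
    unfolding ar_normalized[OF x_eq A_eq] ar1_normalized[OF x_eq A_eq \<alpha>_pos] unfolding x_eq A_eq
    unfolding m_def[symmetric] using m \<open>0 < N\<close> \<alpha>_pos by (simp add: field_simps power2_eq_square)
  finally show ?thesis .
qed

lemma upper_bound:
  "2 * ar - x / N + x * ar1
    \<le> 2 * sqrt (2 * N) * K - (N - 4) * x / (N * (N - 1))
       - 6 * (sqrt (2 * N) - 2) * K * x / (3 * x + 2 * sqrt (2 * N) * (N - 1) * K)"
proof -
  obtain t \<alpha> where x_eq: "x = (N - 1) * K * t" and A_eq: "A = K * \<alpha>" and t: "0 \<le> t"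
    and \<alpha>_pos: "0 < \<alpha>" and "t + 2 < \<alpha>" and \<alpha>_sq: "\<alpha>^2 = (t + 2)^2 + 2 * N - 4"
    by (rule normalized_coordinates)
  define m where "m = N - 1"
  have m: "0 < m" and "0 < N" using N unfolding m_def by auto
  define s where "s = sqrt (2 * N)"
  have s_sq: "s^2 = 2 * N" unfolding s_def using N by simp
  have "2^2 \<le> 2 * N" using N by simp
  then have s: "2 \<le> s" unfolding s_def by (rule real_le_rsqrt)
  define T where "T = 3 * t + 2 * s"
  have T: "0 < T" unfolding T_def using t s by simp
  have den: "3 * x + 2 * s * (N - 1) * K = (N - 1) * K * T"
    unfolding x_eq T_def by (simp add: algebra_simps)
  \<comment> \<open>T is kept abstract so that field_simps clears it; hence \<open>\<alpha> * T * (2 * s + 3 * t)\<close>.\<close>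
  have "2 * s * K - (N - 4) * x / (N * (N - 1)) - 6 * (s - 2) * K * x / (3 * x + 2 * s * (N - 1) * K)
      - (2 * ar - x / N + x * ar1)
      = K * (\<alpha> * T * (2 * s + 3 * t) - ((2 * \<alpha>^2 + t * (t + 2)) * T + 6 * (s - 2) * t * \<alpha>))
        / (\<alpha> * T)"
    unfolding den ar_normalized[OF x_eq A_eq] ar1_normalized[OF x_eq A_eq \<alpha>_pos]
    unfolding x_eq m_def[symmetric] using m \<open>0 < N\<close> K \<alpha>_pos T
    by (simp add: field_simps power2_eq_square) (simp add: m_def algebra_simps)
  also have "\<dots> \<ge> 0"
  proof -
    have "\<alpha>^2 = t^2 + 4 * t + s^2" using \<alpha>_sq s_sq by (simp add: power2_eq_square algebra_simps)
    from normalized_upper_ineq[OF s t \<alpha>_pos this]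
    have "(2 * \<alpha>^2 + t * (t + 2)) * T + 6 * (s - 2) * t * \<alpha> \<le> \<alpha> * T * (2 * s + 3 * t)"
      unfolding T_def by (simp add: power2_eq_square algebra_simps)
    then show ?thesis using K \<alpha>_pos T by (intro divide_nonneg_pos mult_nonneg_nonneg) auto
  qed
  finally show ?thesis unfolding s_def by simp
qed

lemma mixed_bound:
  "x / (N - 1) * (A + N * K) - (x / (N - 1) + 2 * N * K) * (ar + A - N * K - x * ar1)
    < - (2 * x * K / (N - 1)) + 2 * N * (N - 4) * K^2"
proof -
  obtain t \<alpha> where x_eq: "x = (N - 1) * K * t" and A_eq: "A = K * \<alpha>" and t: "0 \<le> t"
    and \<alpha>_pos: "0 < \<alpha>" and "t + 2 < \<alpha>" and \<alpha>_sq: "\<alpha>^2 = (t + 2)^2 + 2 * N - 4"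
    by (rule normalized_coordinates)
  define m where "m = N - 1"
  have m: "0 < m" and "0 < N" using N unfolding m_def by auto
  have "x / (N - 1) * (A + N * K) - (x / (N - 1) + 2 * N * K) * (ar + A - N * K - x * ar1)
      - (- (2 * x * K / (N - 1)) + 2 * N * (N - 4) * K^2)
      = K^2 * (t * \<alpha>^2 + N * t * \<alpha> - (t + 2 * N) * (2 * \<alpha>^2 - t * (t + 2) - N * \<alpha>)
          + 2 * t * \<alpha> - 2 * N * (N - 4) * \<alpha>) / \<alpha>"
    unfolding ar_normalized[OF x_eq A_eq] ar1_normalized[OF x_eq A_eq \<alpha>_pos]
    unfolding x_eq A_eq m_def[symmetric] using m \<open>0 < N\<close> K \<alpha>_pos
    by (simp add: field_simps power2_eq_square)
  also have "\<dots> < 0"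
    using normalized_mixed_ineq[OF N t \<alpha>_pos \<alpha>_sq] K \<alpha>_pos by (intro divide_neg_pos mult_pos_neg) auto
  finally show ?thesis by simp
qed

end

theorem lemma2p3:
  fixes n :: nat and K :: real
  assumes "n \<ge> 4" and "K > 0"
  shows "\<forall>x\<ge>0.
    let a = a_fun n K x; ar = ar_fun n K x;
        ar1 = deriv (ar_fun n K) x; ar2 = deriv (deriv (ar_fun n K)) x; N = real n in
    4 * x * ar1^2 / ar < 1 \<and>
    2 * x * ar2 + ar1 < 2 * (N - 1) / (N * (N + 2)) \<and>
    (N - 2) / sqrt (N * (N - 1)) * sqrt (x * ar) + ar < x / N + N * K \<and>
    N * K * (ar + x * ar1) - a * (ar - x * ar1)
      \<ge> 2 * N * (N - 2) * (N - 1)^2 * K^4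
          / (x + sqrt (2 + sqrt (2 * N)) * (N - 1) * K)^2 \<and>
    2 * ar - x / N + x * ar1
      \<le> 2 * sqrt (2 * N) * K - (N - 4) * x / (N * (N - 1))
         - 6 * (sqrt (2 * N) - 2) * K * x / (3 * x + 2 * sqrt (2 * N) * (N - 1) * K) \<and>
    x / (N - 1) * (a + N * K) - (x / (N - 1) + 2 * N * K) * (ar + a - N * K - x * ar1)
      < - (2 * x * K / (N - 1)) + 2 * N * (N - 4) * K^2"
proof -
  have n: "2 < n" "K \<noteq> 0" using assms by auto
  have point: "a_at_point (real n) K x (a_fun n K x)" if "0 \<le> x" for x
    using assms that by unfold_locales (auto simp: a_fun_def)
  have ar_derivs: "ar_fun n K x = a_at_point.ar (real n) x (a_fun n K x)"
    "deriv (ar_fun n K) x = a_at_point.ar1 (real n) K x (a_fun n K x)" if "0 \<le> x" for x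
    using point[OF that] by (simp_all only: ar_fun_def deriv_ar_fun[OF n] a_at_point.ar_def a_at_point.ar1_def)
  have second_deriv: "deriv (deriv (ar_fun n K)) x = a_at_point.ar2 (real n) K (a_fun n K x)"
    if "0 \<le> x" for x
    using point[OF that] by (simp only: deriv2_ar_fun[OF n] a_at_point.ar2_def)
  show ?thesis
    using a_at_point.slope_bound[OF point] a_at_point.second_order_bound[OF point]
      a_at_point.sqrt_bound[OF point] a_at_point.lower_bound[OF point]
      a_at_point.upper_bound[OF point] a_at_point.mixed_bound[OF point]
    by (simp add: Let_def ar_derivs second_deriv)
qed

end
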